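(* Let $G$ be a split connected reductive group, $M\subseteq G$ a Levi subgroup containing the maximal torus $T$, and $\lambda\in X^*(T)$. For every $w^M\in W^M$, $(w^M)^{-1}\mathrm{Adm}_M(\lambda)\,w^M\subseteq\mathrm{Adm}(\lambda)$.
   Context: $W^M=\{w\in W:\ell(s_\alpha w)>\ell(w)\text{ for all simple roots }\alpha\text{ of }M\}$. For $\lambda\in X^*(T)$, $\mathrm{Adm}(\lambda)=\{\tilde w\in\tilde W:\tilde w\le t_{w(\lambda)}\text{ for some }w\in W\}$, where $\tilde W=X^*(T)\rtimes W$ carries the Bruhat order $\le$ defined via the dominant base alcove (elements in different cosets of the affine Weyl group are incomparable); $\mathrm{Adm}_M(\lambda)\subseteq\tilde W_M=X^*(T)\rtimes W_M$ is defined in the same way for $M$ (with $M$'s dominant base alcove). *)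

theory Defs
  imports "HOL-Analysis.Analysis"
begin

(* Character lattice X^*(T) = Z^n (as int^'n), cocharacter lattice X_*(T) = Z^n,
   standard pairing; V = X^*(T) (x) R = real^'n. *)

definition rvec :: "int ^ 'n \<Rightarrow> real ^ 'n" where
  "rvec v = (\<chi> i. of_int (v $ i))"

definition lattice :: "(real ^ 'n) set" where
  "lattice = range rvec"

definition pairing :: "real ^ 'n \<Rightarrow> int ^ 'n \<Rightarrow> real" where
  "pairing x c = x \<bullet> rvec c"

definition refl :: "int ^ 'n \<Rightarrow> int ^ 'n \<Rightarrow> real ^ 'n \<Rightarrow> real ^ 'n" where
  "refl a c x = x - pairing x c *\<^sub>R rvec a"

definition corefl :: "int ^ 'n \<Rightarrow> int ^ 'n \<Rightarrow> real ^ 'n \<Rightarrow> real ^ 'n" where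
  "corefl a c y = y - (rvec a \<bullet> y) *\<^sub>R rvec c"

(* reduced root datum (X, Phi, X^vee, Phi^vee) with X = X^vee = Z^n, roots R, coroot map cr *)
definition reduced_root_datum :: "(int ^ 'n) set \<Rightarrow> (int ^ 'n \<Rightarrow> int ^ 'n) \<Rightarrow> bool" where
  "reduced_root_datum R cr \<longleftrightarrow>
     finite R \<and> inj_on cr R \<and>
     (\<forall>a\<in>R. pairing (rvec a) (cr a) = 2) \<and>
     (\<forall>a\<in>R. refl a (cr a) ` (rvec ` R) = rvec ` R) \<and>
     (\<forall>a\<in>R. corefl a (cr a) ` (rvec ` cr ` R) = rvec ` cr ` R) \<and>
     (\<forall>a\<in>R. 2 *\<^sub>R rvec a \<notin> rvec ` R)"

(* positive system determined by a Borel subgroup containing T, i.e. by a regular cocharacter *)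
definition pos_system :: "(int ^ 'n) set \<Rightarrow> (int ^ 'n) set \<Rightarrow> bool" where
  "pos_system R P \<longleftrightarrow> (\<exists>v :: int ^ 'n. (\<forall>a\<in>R. pairing (rvec a) v \<noteq> 0) \<and>
                          P = {a\<in>R. pairing (rvec a) v > 0})"

(* root system of a Levi subgroup containing T: the roots in a subspace *)
definition levi_roots :: "(int ^ 'n) set \<Rightarrow> (int ^ 'n) set \<Rightarrow> bool" where
  "levi_roots R RM \<longleftrightarrow> RM \<subseteq> R \<and> (\<forall>b\<in>R. rvec b \<in> span (rvec ` RM) \<longrightarrow> b \<in> RM)"

inductive_set weyl :: "(int ^ 'n) set \<Rightarrow> (int ^ 'n \<Rightarrow> int ^ 'n)
                        \<Rightarrow> (real ^ 'n \<Rightarrow> real ^ 'n) set"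
  for S cr where
  weyl_id: "id \<in> weyl S cr"
| weyl_step: "w \<in> weyl S cr \<Longrightarrow> a \<in> S \<Longrightarrow> refl a (cr a) \<circ> w \<in> weyl S cr"

definition finlen :: "(int ^ 'n) set \<Rightarrow> (real ^ 'n \<Rightarrow> real ^ 'n) \<Rightarrow> nat" where
  "finlen P w = card {a\<in>P. \<exists>b\<in>P. w (rvec a) = - rvec b}"

definition simple_roots :: "(int ^ 'n) set \<Rightarrow> (int ^ 'n) set" where
  "simple_roots P = {a\<in>P. \<not> (\<exists>b\<in>P. \<exists>c\<in>P. a = b + c)}"

definition WM_set :: "(int ^ 'n) set \<Rightarrow> (int ^ 'n) set \<Rightarrow> (int ^ 'n) set
                      \<Rightarrow> (int ^ 'n \<Rightarrow> int ^ 'n) \<Rightarrow> (real ^ 'n \<Rightarrow> real ^ 'n) set" where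
  "WM_set R RM P cr = {w\<in>weyl R cr. \<forall>a\<in>simple_roots (P \<inter> RM).
                           finlen P (refl a (cr a) \<circ> w) > finlen P w}"

(* extended affine Weyl group X^* \<rtimes> W: pairs (lambda, w) = t_lambda w *)
type_synonym ('n) ewel = "(real ^ ('n::finite)) \<times> (real ^ 'n \<Rightarrow> real ^ 'n)"

definition ext_weyl :: "(int ^ 'n) set \<Rightarrow> (int ^ 'n \<Rightarrow> int ^ 'n) \<Rightarrow> ('n::finite) ewel set" where
  "ext_weyl S cr = lattice \<times> weyl S cr"

definition emult :: "('n::finite) ewel \<Rightarrow> ('n::finite) ewel \<Rightarrow> ('n::finite) ewel" where
  "emult x y = (fst x + snd x (fst y), snd x \<circ> snd y)"

definition eact :: "('n::finite) ewel \<Rightarrow> real ^ 'n \<Rightarrow> real ^ 'n" where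
  "eact x v = fst x + snd x v"

(* affine reflection s_{a,k}: v \<mapsto> v - (<v,a^vee> - k) a, i.e. t_{k a} s_a *)
definition affrefl :: "(int ^ 'n \<Rightarrow> int ^ 'n) \<Rightarrow> int ^ 'n \<Rightarrow> int \<Rightarrow> ('n::finite) ewel" where
  "affrefl cr a k = (of_int k *\<^sub>R rvec a, refl a (cr a))"

definition base_alcove :: "(int ^ 'n) set \<Rightarrow> (int ^ 'n \<Rightarrow> int ^ 'n) \<Rightarrow> (real ^ 'n) set" where
  "base_alcove P cr = {v. \<forall>a\<in>P. 0 < pairing v (cr a) \<and> pairing v (cr a) < 1}"

definition separates :: "int ^ 'n \<Rightarrow> int \<Rightarrow> (real ^ 'n) set \<Rightarrow> (real ^ 'n) set \<Rightarrow> bool" where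
  "separates c k A B \<longleftrightarrow>
     (\<forall>p\<in>A. \<forall>q\<in>B. (pairing p c - of_int k) * (pairing q c - of_int k) < 0)"

definition afflen :: "(int ^ 'n) set \<Rightarrow> (int ^ 'n \<Rightarrow> int ^ 'n) \<Rightarrow> ('n::finite) ewel \<Rightarrow> nat" where
  "afflen P cr x = card {(a, k). a \<in> P \<and>
       separates (cr a) k (base_alcove P cr) (eact x ` base_alcove P cr)}"

definition bruhat_step :: "(int ^ 'n) set \<Rightarrow> (int ^ 'n \<Rightarrow> int ^ 'n) \<Rightarrow> (('n::finite) ewel \<times> ('n::finite) ewel) set" where
  "bruhat_step P cr = {(x, emult (affrefl cr a k) x) | x a k.
       a \<in> P \<and> afflen P cr x < afflen P cr (emult (affrefl cr a k) x)}"

definition bruhat_le :: "(int ^ 'n) set \<Rightarrow> (int ^ 'n \<Rightarrow> int ^ 'n) \<Rightarrow> ('n::finite) ewel \<Rightarrow> ('n::finite) ewel \<Rightarrow> bool" where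
  "bruhat_le P cr x y \<longleftrightarrow> (x, y) \<in> (bruhat_step P cr)\<^sup>*"

definition Adm :: "(int ^ 'n) set \<Rightarrow> (int ^ 'n) set \<Rightarrow> (int ^ 'n \<Rightarrow> int ^ 'n)
                   \<Rightarrow> int ^ 'n \<Rightarrow> ('n::finite) ewel set" where
  "Adm S Q cr lam = {x \<in> ext_weyl S cr.
       \<exists>w\<in>weyl S cr. bruhat_le Q cr x (w (rvec lam), id)}"

end

(*
  In the finite and in the affine Weyl group, the length of x counts the walls that separate a
  base chamber A from x A. If the wall H of a reflection s does not separate A from a chamber C,
  then s C is separated from A by H itself and by the mirror image of every wall that separated
  A from C but no longer separates A from s C; so s lengthens (card_walls_between_reflect_less).
  Conversely, if H does separate A from C, then s shortens. Hence x < s_(a,k) x in the Bruhat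
  order of M exactly when the wall H_(a,k) does not separate the base alcove A_M from x A_M.

  For u in W^M, the length condition at the simple roots of M forces u^-1 to send the positive
  roots of M to positive roots of G. So u maps the base alcove of G into A_M. Moreover,
  conjugation by u carries the wall H_(a,k) of M to the wall H_(u^-1 a, k) of G and creates no
  separation. Conjugation therefore maps Bruhat steps of M to Bruhat steps of G, and t_(w lam)
  to t_(u^-1 w lam), which proves the claim.
*)
theory Submission
  imports Defs
begin

section \<open>Walls and reflections\<close>

definition walls_between :: "'i set \<Rightarrow> ('i \<Rightarrow> 'v \<Rightarrow> real) \<Rightarrow> 'v \<Rightarrow> 'v \<Rightarrow> 'i set" where
  "walls_between I g p q = {i\<in>I. g i p * g i q < 0}"

definition in_chamber :: "'i set \<Rightarrow> ('i \<Rightarrow> 'v \<Rightarrow> real) \<Rightarrow> 'v set \<Rightarrow> bool" where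
  "in_chamber I g X \<longleftrightarrow> (\<forall>i\<in>I. \<forall>p\<in>X. \<forall>q\<in>X. g i p * g i q > 0)"

lemma in_chamber_same_sign:
  "in_chamber I g X \<Longrightarrow> i \<in> I \<Longrightarrow> p \<in> X \<Longrightarrow> q \<in> X \<Longrightarrow> g i p * g i q > 0"
  unfolding in_chamber_def by blast

lemma in_chamber_nonzero: "in_chamber I g X \<Longrightarrow> i \<in> I \<Longrightarrow> p \<in> X \<Longrightarrow> g i p \<noteq> 0"
  using in_chamber_same_sign[of I g X i p p] by auto

lemma walls_between_chambers:
  assumes X: "in_chamber I g X" and Y: "in_chamber I g Y" and "p \<in> X" "q \<in> Y"
  shows "{i\<in>I. \<forall>p'\<in>X. \<forall>q'\<in>Y. g i p' * g i q' < 0} = walls_between I g p q"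
proof (intro equalityI subsetI)
  fix i assume "i \<in> walls_between I g p q"
  then have i: "i \<in> I" "g i p * g i q < 0" unfolding walls_between_def by auto
  have "g i p' * g i q' < 0" if "p' \<in> X" "q' \<in> Y" for p' q'
  proof -
    have "g i p' * g i p > 0" "g i q * g i q' > 0"
      using in_chamber_same_sign[OF X i(1) that(1) \<open>p \<in> X\<close>]
        in_chamber_same_sign[OF Y i(1) \<open>q \<in> Y\<close> that(2)] by auto
    with i(2) show ?thesis by (auto simp: zero_less_mult_iff mult_less_0_iff)
  qed
  then show "i \<in> {i\<in>I. \<forall>p'\<in>X. \<forall>q'\<in>Y. g i p' * g i q' < 0}" using i(1) by blast
qed (use assms in \<open>auto simp: walls_between_def\<close>)

lemma sign_square: "e \<in> {1, -1} \<Longrightarrow> e * e = (1::real)"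
  by auto

text \<open>The walls are the zero sets of the functions g i, i \<in> I; r is the reflection in the wall h.\<close>

locale wall_reflection =
  fixes I :: "'i set" and g :: "'i \<Rightarrow> 'v \<Rightarrow> real" and r :: "'v \<Rightarrow> 'v" and h :: 'i
  assumes involution: "r (r v) = v"
    and wall_in: "h \<in> I"
    and wall_flip: "g h (r v) = - g h v"
    and wall_shift: "i \<in> I \<Longrightarrow> \<exists>c. \<forall>v. g i (r v) = g i v - c * g h v"
    and walls_permuted: "i \<in> I \<Longrightarrow> \<exists>j\<in>I. \<exists>e\<in>{1, -1}. \<forall>v. g j (r v) = e * g i v"
    and walls_distinct: "i \<in> I \<Longrightarrow> j \<in> I \<Longrightarrow> e \<in> {1, -1} \<Longrightarrow> (\<forall>v. g i v = e * g j v) \<Longrightarrow> i = j"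
begin

definition mirror :: "'i \<Rightarrow> 'i" where
  "mirror i = (SOME j. j \<in> I \<and> (\<exists>e\<in>{1, -1}. \<forall>v. g j (r v) = e * g i v))"

lemma mirror_spec:
  assumes "i \<in> I"
  shows "mirror i \<in> I \<and> (\<exists>e\<in>{1, -1}. \<forall>v. g (mirror i) (r v) = e * g i v)"
proof -
  have "\<exists>j. j \<in> I \<and> (\<exists>e\<in>{1, -1}. \<forall>v. g j (r v) = e * g i v)"
    using walls_permuted[OF assms] by blast
  then show ?thesis unfolding mirror_def by (rule someI_ex)
qed

lemma mirror_in: "i \<in> I \<Longrightarrow> mirror i \<in> I"
  using mirror_spec by blast

lemma mirror_sign_product:
  assumes "i \<in> I"
  shows "g (mirror i) p * g (mirror i) q = g i (r p) * g i (r q)"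
proof -
  obtain e where e: "e \<in> {1, -1}" "\<And>v. g (mirror i) (r v) = e * g i v"
    using mirror_spec[OF assms] by blast
  have "g (mirror i) v = e * g i (r v)" for v
    using e(2)[of "r v"] by (simp add: involution)
  then have "g (mirror i) p * g (mirror i) q = (e * e) * (g i (r p) * g i (r q))"
    by (simp add: algebra_simps)
  then show ?thesis using sign_square[OF e(1)] by simp
qed

lemma mirror_inj:
  assumes "i \<in> I" "j \<in> I" "mirror i = mirror j"
  shows "i = j"
proof -
  obtain e where e: "e \<in> {1, -1}" "\<And>v. g (mirror i) (r v) = e * g i v"
    using mirror_spec[OF assms(1)] by blast
  obtain e' where e': "e' \<in> {1, -1}" "\<And>v. g (mirror j) (r v) = e' * g j v"
    using mirror_spec[OF assms(2)] by blast
  have "g i v = (e * e') * g j v" for v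
  proof -
    have "g i v = (e * e) * g i v" using sign_square[OF e(1)] by simp
    also have "\<dots> = e * g (mirror i) (r v)" using e(2)[of v] by simp
    also have "\<dots> = (e * e') * g j v" using e'(2)[of v] assms(3) by simp
    finally show ?thesis .
  qed
  moreover have "e * e' \<in> {1, -1}" using e(1) e'(1) by auto
  ultimately show ?thesis using walls_distinct[OF assms(1,2), of "e * e'"] by blast
qed

lemma mirror_wall: "mirror h = h"
proof -
  obtain e where e: "e \<in> {1, -1}" "\<And>v. g (mirror h) (r v) = e * g h v"
    using mirror_spec[OF wall_in] by blast
  have "g (mirror h) v = (- e) * g h v" for v
    using e(2)[of "r v"] by (simp add: involution wall_flip)
  moreover have "- e \<in> {1, -1}" using e(1) by auto
  ultimately show ?thesis
    using walls_distinct[OF mirror_in[OF wall_in] wall_in, of "- e"] by blast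
qed

lemma crossed_wall_sign:
  assumes "i \<in> I" "g i p * g i q < 0" "g i p * g i (r q) > 0" "g h p * g h q > 0"
  shows "g i (r p) * g i q < 0"
proof -
  obtain c where c: "\<And>v. g i (r v) = g i v - c * g h v"
    using wall_shift[OF assms(1)] by blast
  \<comment> \<open>c * g h has the same sign at p and q; flipping g i at q forces it to have the sign of g i q.\<close>
  show ?thesis
    using assms(2-4) unfolding c by (smt (verit, ccfv_threshold) mult_less_0_iff zero_less_mult_iff)
qed

lemma mirror_of_lost_wall:
  assumes p: "\<forall>i\<in>I. g i p \<noteq> 0" and rq: "\<forall>i\<in>I. g i (r q) \<noteq> 0"
    and same_side: "g h p * g h q > 0"
    and lost: "i \<in> walls_between I g p q" "i \<notin> walls_between I g p (r q)"
  shows "mirror i \<in> walls_between I g p (r q) - walls_between I g p q"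
proof -
  have i: "i \<in> I" "g i p * g i q < 0" "\<not> g i p * g i (r q) < 0"
    using lost by (auto simp: walls_between_def)
  then have "g i p * g i (r q) > 0"
    using p rq by (metis linorder_neqE_linordered_idom mult_eq_0_iff)
  moreover have "g i (r p) * g i q < 0"
    using crossed_wall_sign[OF i(1) i(2) calculation same_side] .
  ultimately have "g i (r p) * g i (r q) > 0"
    using i(2) by (metis mult_less_0_iff order.asym zero_less_mult_iff)
  with \<open>g i (r p) * g i q < 0\<close> show ?thesis
    using mirror_sign_product[OF i(1), of p "r q"] mirror_sign_product[OF i(1), of p q] mirror_in[OF i(1)]
    by (simp add: walls_between_def involution)
qed

theorem card_walls_between_reflect_less:
  assumes p: "\<forall>i\<in>I. g i p \<noteq> 0" and rq: "\<forall>i\<in>I. g i (r q) \<noteq> 0"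
    and same_side: "g h p * g h q > 0"
    and fin: "finite (walls_between I g p (r q))"
  shows "card (walls_between I g p q) < card (walls_between I g p (r q))"
proof -
  define C where "C = walls_between I g p q"
  define D where "D = walls_between I g p (r q)"
  have "h \<in> D" using same_side wall_in by (simp add: D_def walls_between_def wall_flip)
  have "h \<notin> C" using same_side by (simp add: C_def walls_between_def)
  have lost: "mirror i \<in> D - C" if "i \<in> C" "i \<notin> D" for i
    using mirror_of_lost_wall[OF p rq same_side] that by (simp add: C_def D_def)
  define \<phi> where "\<phi> i = (if i \<in> D then i else mirror i)" for i
  have "inj_on \<phi> C"
  proof
    fix i j assume "i \<in> C" "j \<in> C" "\<phi> i = \<phi> j"
    then show "i = j"
      using lost mirror_inj unfolding \<phi>_def by (auto simp: C_def walls_between_def split: if_splits)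
  qed
  moreover have "\<phi> ` C \<subseteq> D - {h}"
  proof -
    have "mirror i \<noteq> h" if "i \<in> C" for i
      using mirror_inj[of i h] mirror_wall wall_in that \<open>h \<notin> C\<close> by (auto simp: C_def walls_between_def)
    then show ?thesis using lost \<open>h \<notin> C\<close> by (auto simp: \<phi>_def)
  qed
  ultimately have "card C \<le> card (D - {h})"
    using fin by (intro card_inj_on_le) (auto simp: D_def)
  also have "\<dots> < card D" using fin \<open>h \<in> D\<close> unfolding D_def by (rule card_Diff1_less)
  finally show ?thesis by (simp add: C_def D_def)
qed

end

section \<open>Root data\<close>

lemma rvec_add [simp]: "rvec (a + b) = rvec a + rvec b"
  by (simp add: rvec_def vec_eq_iff)

lemma rvec_minus [simp]: "rvec (- a) = - rvec a"
  by (simp add: rvec_def vec_eq_iff)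

lemma rvec_diff [simp]: "rvec (a - b) = rvec a - rvec b"
  by (simp add: rvec_def vec_eq_iff)

lemma rvec_zero [simp]: "rvec 0 = 0"
  by (simp add: rvec_def vec_eq_iff)

lemma rvec_scaleR_int: "rvec (k *s a) = of_int k *\<^sub>R rvec a"
  by (simp add: rvec_def vec_eq_iff)

lemma rvec_eq_iff [simp]: "rvec a = rvec b \<longleftrightarrow> a = b"
  by (auto simp: rvec_def vec_eq_iff)

lemma inner_rvec: "rvec a \<bullet> rvec b = of_int (\<Sum>i\<in>UNIV. a $ i * b $ i)"
  by (simp add: rvec_def inner_vec_def)

lemma inner_rvec_Ints: "rvec a \<bullet> rvec b \<in> \<int>"
  by (simp only: inner_rvec Ints_of_int)

lemma rvec_in_lattice: "rvec a \<in> lattice"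
  by (simp add: lattice_def)

lemma zero_in_lattice: "0 \<in> lattice"
  using rvec_in_lattice[of 0] by simp

lemma lattice_add: "x \<in> lattice \<Longrightarrow> y \<in> lattice \<Longrightarrow> x + y \<in> lattice"
  by (auto simp: lattice_def simp flip: rvec_add)

lemma lattice_scaleR_int: "x \<in> lattice \<Longrightarrow> of_int k *\<^sub>R x \<in> lattice"
  by (auto simp: lattice_def simp flip: rvec_scaleR_int)

lemma lattice_inner_Ints: "x \<in> lattice \<Longrightarrow> x \<bullet> rvec c \<in> \<int>"
  by (auto simp: lattice_def inner_rvec_Ints)

lemma refl_linear: "linear (refl a c)"
  unfolding refl_def pairing_def
  by (rule linearI) (auto simp: algebra_simps inner_add_left)

lemma corefl_linear: "linear (corefl a c)"
  unfolding corefl_def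
  by (rule linearI) (auto simp: algebra_simps inner_add_right)

lemma inner_refl_left: "refl a c x \<bullet> y = x \<bullet> corefl a c y"
  unfolding refl_def corefl_def pairing_def
  by (simp add: algebra_simps inner_diff_left inner_diff_right)

lemma refl_involution: "pairing (rvec a) c = 2 \<Longrightarrow> refl a c (refl a c x) = x"
  unfolding refl_def pairing_def by (simp add: algebra_simps inner_diff_left)

lemma corefl_involution: "pairing (rvec a) c = 2 \<Longrightarrow> corefl a c (corefl a c y) = y"
  unfolding corefl_def pairing_def by (simp add: algebra_simps inner_diff_right)

lemma refl_root: "pairing (rvec a) c = 2 \<Longrightarrow> refl a c (rvec a) = - rvec a"
  unfolding refl_def pairing_def by (simp add: scaleR_2)

lemma corefl_coroot: "pairing (rvec a) c = 2 \<Longrightarrow> corefl a c (rvec c) = - rvec c"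
  unfolding corefl_def pairing_def by (simp add: scaleR_2 inner_commute)

lemma lattice_refl:
  assumes "x \<in> lattice" shows "refl a c x \<in> lattice"
proof -
  obtain m where m: "x = rvec m" using assms unfolding lattice_def by auto
  have "refl a c x = rvec (m - (\<Sum>i\<in>UNIV. m $ i * c $ i) *s a)"
    unfolding refl_def pairing_def m rvec_diff rvec_scaleR_int inner_rvec by simp
  then show ?thesis by (metis rvec_in_lattice)
qed

lemma involution_image_eq:
  assumes inv: "\<And>x. f (f x) = x" and sub: "f ` X \<subseteq> X"
  shows "f ` X = X"
proof
  show "X \<subseteq> f ` X"
  proof
    fix x assume "x \<in> X"
    then have "f x \<in> X" using sub by blast
    then show "x \<in> f ` X" using inv[of x] by (metis image_eqI)
  qed
qed (rule sub)

lemma weyl_linear: "w \<in> weyl S cr \<Longrightarrow> linear w"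
  by (induction rule: weyl.induct) (metis linear_id, metis linear_compose refl_linear)

lemma weyl_refl: "a \<in> S \<Longrightarrow> refl a (cr a) \<in> weyl S cr"
  using weyl.weyl_step[OF weyl.weyl_id] by fastforce

lemma weyl_comp: "w \<in> weyl S cr \<Longrightarrow> w' \<in> weyl S cr \<Longrightarrow> w \<circ> w' \<in> weyl S cr"
  by (induction rule: weyl.induct) (auto simp: comp_assoc intro: weyl.weyl_step)

lemma weyl_mono: "w \<in> weyl S cr \<Longrightarrow> S \<subseteq> T \<Longrightarrow> w \<in> weyl T cr"
  by (induction rule: weyl.induct) (auto intro: weyl.intros)

lemma weyl_lattice: "w \<in> weyl S cr \<Longrightarrow> x \<in> lattice \<Longrightarrow> w x \<in> lattice"
  by (induction arbitrary: x rule: weyl.induct) (auto intro: lattice_refl)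

lemma coroot_unique:
  fixes \<beta> \<gamma> \<gamma>' :: "'a::real_inner"
  assumes "finite X" "\<gamma> \<in> X" and b: "\<beta> \<bullet> \<gamma> = 2" and b': "\<beta> \<bullet> \<gamma>' = 2"
    and T: "\<forall>y\<in>X. y - (\<beta> \<bullet> y) *\<^sub>R \<gamma> \<in> X" and T': "\<forall>y\<in>X. y - (\<beta> \<bullet> y) *\<^sub>R \<gamma>' \<in> X"
  shows "\<gamma> = \<gamma>'"
proof (rule ccontr)
  assume "\<gamma> \<noteq> \<gamma>'"
  define d where "d = \<gamma> - \<gamma>'"
  have bd: "\<beta> \<bullet> d = 0" using b b' by (simp add: d_def inner_diff_right)
  \<comment> \<open>The two reflections compose to the translation by 2 d, so X would contain an infinite orbit.\<close>
  have orbit: "\<gamma> + (2 * real m) *\<^sub>R d \<in> X" for m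
  proof (induction m)
    case 0 then show ?case using \<open>\<gamma> \<in> X\<close> by simp
  next
    case (Suc m)
    define z where "z = \<gamma> + (2 * real m) *\<^sub>R d"
    have bz: "\<beta> \<bullet> z = 2" using b bd by (simp add: z_def inner_add_right)
    define z' where "z' = z - (\<beta> \<bullet> z) *\<^sub>R \<gamma>'"
    have "z' \<in> X" using T' Suc by (simp add: z'_def z_def)
    moreover have "\<beta> \<bullet> z' = -2" using bz b' by (simp add: z'_def inner_diff_right)
    ultimately have "z' + 2 *\<^sub>R \<gamma> \<in> X" using T by force
    moreover have "z' + 2 *\<^sub>R \<gamma> = \<gamma> + (2 * real (Suc m)) *\<^sub>R d"
      by (simp add: z'_def z_def bz b b' d_def algebra_simps scaleR_2)
    ultimately show ?case by simp
  qed
  have "inj (\<lambda>m::nat. \<gamma> + (2 * real m) *\<^sub>R d)"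
    using \<open>\<gamma> \<noteq> \<gamma>'\<close> by (auto simp: inj_def d_def)
  then have "infinite (range (\<lambda>m::nat. \<gamma> + (2 * real m) *\<^sub>R d))"
    using finite_imageD by blast
  then show False using orbit \<open>finite X\<close> by (metis finite_subset image_subsetI)
qed

locale root_datum =
  fixes R :: "(int ^ 'n::finite) set" and cr :: "int ^ 'n \<Rightarrow> int ^ 'n"
  assumes reduced: "reduced_root_datum R cr"
begin

lemma finite_roots: "finite R"
  using reduced by (simp add: reduced_root_datum_def)

lemma coroot_inj: "inj_on cr R"
  using reduced by (simp add: reduced_root_datum_def)

lemma pairing_root_coroot: "a \<in> R \<Longrightarrow> pairing (rvec a) (cr a) = 2"
  using reduced by (simp add: reduced_root_datum_def)

lemma inner_root_coroot: "a \<in> R \<Longrightarrow> rvec a \<bullet> rvec (cr a) = 2"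
  using pairing_root_coroot by (simp add: pairing_def)

lemma double_root: "a \<in> R \<Longrightarrow> 2 *\<^sub>R rvec a \<notin> rvec ` R"
  using reduced by (simp add: reduced_root_datum_def)

lemma refl_roots: "c \<in> R \<Longrightarrow> refl c (cr c) ` rvec ` R = rvec ` R"
  using reduced by (simp add: reduced_root_datum_def)

lemma corefl_coroots: "c \<in> R \<Longrightarrow> corefl c (cr c) ` rvec ` cr ` R = rvec ` cr ` R"
  using reduced by (simp add: reduced_root_datum_def)

lemma reflected_root:
  assumes "a \<in> R" "c \<in> R"
  obtains b where "b \<in> R" "rvec b = refl c (cr c) (rvec a)"
proof -
  have "refl c (cr c) (rvec a) \<in> rvec ` R"
    using refl_roots[OF assms(2)] assms(1) by blast
  then obtain b where "b \<in> R" "rvec b = refl c (cr c) (rvec a)" by (metis imageE)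
  then show ?thesis by (rule that)
qed

lemma uminus_root:
  assumes "a \<in> R" shows "- a \<in> R"
proof -
  obtain b where "b \<in> R" "rvec b = refl a (cr a) (rvec a)"
    using reflected_root[OF assms assms] .
  then have "rvec b = rvec (- a)" using refl_root[OF pairing_root_coroot[OF assms]] by simp
  then have "b = - a" by (simp only: rvec_eq_iff)
  then show ?thesis using \<open>b \<in> R\<close> by simp
qed

lemma coroot_reflected_root:
  assumes "b0 \<in> R" "c \<in> R" "b \<in> R" and b: "rvec b = refl c (cr c) (rvec b0)"
  shows "rvec (cr b) = corefl c (cr c) (rvec (cr b0))"
proof (rule coroot_unique[where X = "rvec ` cr ` R" and \<beta> = "rvec b"])
  let ?s = "corefl c (cr c)"
  have c2: "pairing (rvec c) (cr c) = 2" using pairing_root_coroot[OF \<open>c \<in> R\<close>] .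
  have mem: "corefl d (cr d) y \<in> rvec ` cr ` R" if "y \<in> rvec ` cr ` R" "d \<in> R" for y d
    using corefl_coroots[OF that(2)] that(1) by blast
  show "finite (rvec ` cr ` R)" using finite_roots by simp
  show "rvec (cr b) \<in> rvec ` cr ` R" using \<open>b \<in> R\<close> by simp
  show "rvec b \<bullet> rvec (cr b) = 2" using inner_root_coroot[OF \<open>b \<in> R\<close>] .
  show "rvec b \<bullet> ?s (rvec (cr b0)) = 2"
    unfolding b inner_refl_left corefl_involution[OF c2] using inner_root_coroot[OF \<open>b0 \<in> R\<close>] .
  show "\<forall>y\<in>rvec ` cr ` R. y - (rvec b \<bullet> y) *\<^sub>R rvec (cr b) \<in> rvec ` cr ` R"
    using corefl_coroots[OF \<open>b \<in> R\<close>] unfolding corefl_def by blast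
  show "\<forall>y\<in>rvec ` cr ` R. y - (rvec b \<bullet> y) *\<^sub>R ?s (rvec (cr b0)) \<in> rvec ` cr ` R"
  proof
    fix y assume y: "y \<in> rvec ` cr ` R"
    \<comment> \<open>The map in question is the conjugate of the coroot reflection of b0 by that of c.\<close>
    have "?s (corefl b0 (cr b0) (?s y))
        = ?s (?s y) - (rvec b0 \<bullet> ?s y) *\<^sub>R ?s (rvec (cr b0))"
      unfolding corefl_def[of b0]
      by (simp add: linear_diff[OF corefl_linear] linear_cmul[OF corefl_linear])
    also have "\<dots> = y - (rvec b \<bullet> y) *\<^sub>R ?s (rvec (cr b0))"
      unfolding b inner_refl_left corefl_involution[OF c2] ..
    finally have "y - (rvec b \<bullet> y) *\<^sub>R ?s (rvec (cr b0)) = ?s (corefl b0 (cr b0) (?s y))" ..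
    then show "y - (rvec b \<bullet> y) *\<^sub>R ?s (rvec (cr b0)) \<in> rvec ` cr ` R"
      using mem[OF mem[OF mem[OF y \<open>c \<in> R\<close>] \<open>b0 \<in> R\<close>] \<open>c \<in> R\<close>] by simp
  qed
qed

lemma coroot_uminus:
  assumes "a \<in> R" shows "cr (- a) = - cr a"
proof -
  have a2: "pairing (rvec a) (cr a) = 2" using pairing_root_coroot[OF assms] .
  have "rvec (cr (- a)) = corefl a (cr a) (rvec (cr a))"
    using coroot_reflected_root[OF assms assms uminus_root[OF assms]] refl_root[OF a2] by simp
  also have "\<dots> = rvec (- cr a)" using corefl_coroot[OF a2] by simp
  finally show ?thesis by (simp only: rvec_eq_iff)
qed

lemma weyl_invertible: "w \<in> weyl R cr \<Longrightarrow> \<exists>w'\<in>weyl R cr. w' \<circ> w = id \<and> w \<circ> w' = id"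
proof (induction rule: weyl.induct)
  case weyl_id
  then show ?case using weyl.weyl_id[of R cr] by (intro bexI[of _ id]) auto
next
  case (weyl_step w a)
  then obtain w' where w': "w' \<in> weyl R cr" "w' \<circ> w = id" "w \<circ> w' = id" by blast
  let ?s = "refl a (cr a)"
  have ss: "?s \<circ> ?s = id"
    using refl_involution[OF pairing_root_coroot[OF \<open>a \<in> R\<close>]] by (auto simp: fun_eq_iff)
  have "w' \<circ> ?s \<in> weyl R cr" using weyl_comp[OF w'(1) weyl_refl[OF \<open>a \<in> R\<close>]] .
  moreover have "(w' \<circ> ?s) \<circ> (?s \<circ> w) = id" "(?s \<circ> w) \<circ> (w' \<circ> ?s) = id"
    using ss w'(2,3) by (simp_all add: comp_assoc) (metis comp_assoc comp_id)+
  ultimately show ?case by blast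
qed

lemma
  assumes "w \<in> weyl R cr"
  shows weyl_inv: "inv w \<in> weyl R cr"
    and weyl_inv_apply: "inv w (w x) = x"
    and weyl_apply_inv: "w (inv w x) = x"
proof -
  obtain w' where w': "w' \<in> weyl R cr" "w' \<circ> w = id" "w \<circ> w' = id"
    using weyl_invertible[OF assms] by blast
  have "inv w = w'" using inv_unique_comp[OF w'(3) w'(2)] .
  then show "inv w \<in> weyl R cr" "inv w (w x) = x" "w (inv w x) = x"
    using w' by (simp_all add: pointfree_idE)
qed

lemma weyl_transport_root:
  assumes "w \<in> weyl R cr" "a \<in> R"
  obtains b where "b \<in> R" "rvec b = w (rvec a)" "\<And>z. w z \<bullet> rvec (cr b) = z \<bullet> rvec (cr a)"
proof -
  have "\<exists>b\<in>R. rvec b = w (rvec a) \<and> (\<forall>z. w z \<bullet> rvec (cr b) = z \<bullet> rvec (cr a))"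
    using assms(1)
  proof (induction rule: weyl.induct)
    case weyl_id
    then show ?case using assms(2) by auto
  next
    case (weyl_step w c)
    then obtain b0 where b0: "b0 \<in> R" "rvec b0 = w (rvec a)" "\<forall>z. w z \<bullet> rvec (cr b0) = z \<bullet> rvec (cr a)"
      by blast
    obtain b where b: "b \<in> R" "rvec b = refl c (cr c) (rvec b0)"
      using reflected_root[OF b0(1) \<open>c \<in> R\<close>] .
    have "rvec (cr b) = corefl c (cr c) (rvec (cr b0))"
      using coroot_reflected_root[OF b0(1) \<open>c \<in> R\<close> b] .
    then have "\<forall>z. (refl c (cr c) \<circ> w) z \<bullet> rvec (cr b) = z \<bullet> rvec (cr a)"
      using b0(3) by (simp add: inner_refl_left corefl_involution[OF pairing_root_coroot[OF \<open>c \<in> R\<close>]])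
    then show ?case using b b0(2) by auto
  qed
  then show ?thesis using that by blast
qed

lemma weyl_maps_root:
  assumes "w \<in> weyl R cr" "a \<in> R"
  obtains b where "b \<in> R" "rvec b = w (rvec a)"
  by (rule weyl_transport_root[OF assms]) (rule that)

lemma levi_reflected_root:
  assumes levi: "levi_roots R RM" and "a \<in> RM" "c \<in> RM"
  obtains b where "b \<in> RM" "rvec b = refl c (cr c) (rvec a)"
    "rvec (cr b) = corefl c (cr c) (rvec (cr a))"
proof -
  have aR: "a \<in> R" and cR: "c \<in> R" using levi assms(2,3) by (auto simp: levi_roots_def)
  obtain b where b: "b \<in> R" "rvec b = refl c (cr c) (rvec a)"
    using reflected_root[OF aR cR] .
  have "rvec b \<in> span (rvec ` RM)"
    unfolding b(2) refl_def using assms(2,3) by (intro span_diff span_scale span_base) auto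
  then have "b \<in> RM" using levi b(1) unfolding levi_roots_def by blast
  then show ?thesis using that b(2) coroot_reflected_root[OF aR cR b] by blast
qed

lemma levi_reflections:
  assumes levi: "levi_roots R RM" and c: "c \<in> RM"
  shows "refl c (cr c) ` rvec ` RM = rvec ` RM"
    and "corefl c (cr c) ` rvec ` cr ` RM = rvec ` cr ` RM"
proof -
  have c2: "pairing (rvec c) (cr c) = 2" using pairing_root_coroot c levi by (auto simp: levi_roots_def)
  show "refl c (cr c) ` rvec ` RM = rvec ` RM"
  proof (rule involution_image_eq[OF refl_involution[OF c2]], rule image_subsetI)
    fix x assume "x \<in> rvec ` RM"
    then obtain a where a: "a \<in> RM" and x: "x = rvec a" by blast
    obtain b where "b \<in> RM" "rvec b = refl c (cr c) (rvec a)"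
      using levi_reflected_root[OF levi a c] by blast
    then show "refl c (cr c) x \<in> rvec ` RM" unfolding x by (metis image_eqI)
  qed
  show "corefl c (cr c) ` rvec ` cr ` RM = rvec ` cr ` RM"
  proof (rule involution_image_eq[OF corefl_involution[OF c2]], rule image_subsetI)
    fix y assume "y \<in> rvec ` cr ` RM"
    then obtain a where a: "a \<in> RM" and y: "y = rvec (cr a)" by blast
    obtain b where "b \<in> RM" "rvec (cr b) = corefl c (cr c) (rvec (cr a))"
      using levi_reflected_root[OF levi a c] by blast
    then show "corefl c (cr c) y \<in> rvec ` cr ` RM" unfolding y by (metis image_eqI image_image)
  qed
qed

lemma levi_root_datum:
  assumes levi: "levi_roots R RM"
  shows "root_datum RM cr"
proof -
  have sub: "RM \<subseteq> R" using levi by (simp add: levi_roots_def)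
  have "finite RM" using finite_subset[OF sub finite_roots] .
  moreover have "inj_on cr RM" using inj_on_subset[OF coroot_inj sub] .
  moreover have "\<forall>a\<in>RM. pairing (rvec a) (cr a) = 2" using sub pairing_root_coroot by blast
  moreover have "\<forall>a\<in>RM. 2 *\<^sub>R rvec a \<notin> rvec ` RM"
  proof (intro ballI notI)
    fix a assume "a \<in> RM" and double: "2 *\<^sub>R rvec a \<in> rvec ` RM"
    have "2 *\<^sub>R rvec a \<in> rvec ` R" using image_mono[OF sub, of rvec] double by (rule subsetD)
    then show False using double_root[of a] \<open>a \<in> RM\<close> sub by blast
  qed
  ultimately show ?thesis
    unfolding root_datum_def reduced_root_datum_def using levi_reflections[OF levi] by simp
qed

end

section \<open>Positive systems and the base alcove\<close>

locale positive_root_datum = root_datum +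
  fixes P :: "(int ^ 'n) set"
  assumes positive: "pos_system R P"
begin

lemma positive_systemE:
  obtains v where "\<forall>a\<in>R. rvec a \<bullet> v \<noteq> 0" "P = {a\<in>R. rvec a \<bullet> v > 0}"
proof -
  obtain v where "\<forall>a\<in>R. pairing (rvec a) v \<noteq> 0" "P = {a\<in>R. pairing (rvec a) v > 0}"
    using positive unfolding pos_system_def by blast
  then show ?thesis using that[of "rvec v"] by (simp add: pairing_def)
qed

lemma positive_subset: "P \<subseteq> R"
  using positive by (auto simp: pos_system_def)

lemma finite_positive: "finite P"
  using finite_subset[OF positive_subset finite_roots] .

lemma root_positive_or_negative: "a \<in> R \<Longrightarrow> a \<in> P \<or> - a \<in> P"
  by (rule positive_systemE) (auto simp: uminus_root inner_minus_left)

lemma positive_uminus: "a \<in> P \<Longrightarrow> - a \<notin> P"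
  by (rule positive_systemE) (auto simp: inner_minus_left)

lemma levi_positive_root_datum:
  assumes "levi_roots R RM"
  shows "positive_root_datum RM cr (P \<inter> RM)"
proof -
  interpret M: root_datum RM cr using levi_root_datum[OF assms] .
  have "RM \<subseteq> R" using assms by (simp add: levi_roots_def)
  obtain v where "\<forall>a\<in>R. pairing (rvec a) v \<noteq> 0" "P = {a\<in>R. pairing (rvec a) v > 0}"
    using positive unfolding pos_system_def by blast
  with \<open>RM \<subseteq> R\<close> have "pos_system RM (P \<inter> RM)"
    unfolding pos_system_def by (intro exI[of _ v]) auto
  then show ?thesis by unfold_locales
qed

end

context root_datum
begin

definition root_form :: "real ^ 'n \<Rightarrow> real ^ 'n \<Rightarrow> real" where
  "root_form y z = (\<Sum>b\<in>R. (rvec b \<bullet> y) * (rvec b \<bullet> z))"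

lemma sum_roots_refl:
  assumes "a \<in> R"
  shows "(\<Sum>b\<in>R. F (refl a (cr a) (rvec b))) = (\<Sum>b\<in>R. F (rvec b))"
proof -
  let ?s = "refl a (cr a)"
  have "inj ?s" by (metis inj_def refl_involution[OF pairing_root_coroot[OF assms]])
  have "(\<Sum>b\<in>R. F (?s (rvec b))) = (\<Sum>x\<in>rvec ` R. F (?s x))"
    by (simp add: sum.reindex inj_on_def)
  also have "\<dots> = (\<Sum>y\<in>?s ` rvec ` R. F y)"
    using sum.reindex[OF inj_on_subset[OF \<open>inj ?s\<close>], of "rvec ` R" F] by simp
  also have "\<dots> = (\<Sum>b\<in>R. F (rvec b))"
    unfolding refl_roots[OF assms] by (simp add: sum.reindex inj_on_def)
  finally show ?thesis .
qed

lemma root_form_coroot: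
  assumes "a \<in> R"
  shows "2 * root_form y (rvec (cr a)) = (rvec a \<bullet> y) * root_form (rvec (cr a)) (rvec (cr a))"
proof -
  let ?s = "corefl a (cr a)" and ?c = "rvec (cr a)"
  have a2: "pairing (rvec a) (cr a) = 2" using pairing_root_coroot[OF assms] .
  have "root_form y ?c = root_form (?s y) (?s ?c)"
    unfolding root_form_def inner_refl_left[symmetric]
    by (rule sum_roots_refl[OF assms, of "\<lambda>x. (x \<bullet> y) * (x \<bullet> ?c)", symmetric])
  also have "\<dots> = - root_form (?s y) ?c"
    unfolding corefl_coroot[OF a2] by (simp add: root_form_def sum_negf)
  finally have "root_form y ?c = - root_form (?s y) ?c" .
  moreover have "root_form (?s y) ?c = root_form y ?c - (rvec a \<bullet> y) * root_form ?c ?c"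
    unfolding root_form_def corefl_def
    by (simp add: inner_diff_right sum_subtractf sum_distrib_left algebra_simps)
  ultimately show ?thesis by simp
qed

lemma root_form_coroot_pos: "a \<in> R \<Longrightarrow> root_form (rvec (cr a)) (rvec (cr a)) > 0"
proof -
  assume a: "a \<in> R"
  have "(rvec a \<bullet> rvec (cr a)) * (rvec a \<bullet> rvec (cr a)) \<le> root_form (rvec (cr a)) (rvec (cr a))"
    unfolding root_form_def by (rule member_le_sum[OF a]) (auto simp: finite_roots)
  then show ?thesis using inner_root_coroot[OF a] by simp
qed

end

context positive_root_datum
begin

lemma base_alcove_nonempty: "base_alcove P cr \<noteq> {}"
proof -
  obtain v where v: "\<forall>a\<in>R. rvec a \<bullet> v \<noteq> 0" "P = {a\<in>R. rvec a \<bullet> v > 0}"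
    by (rule positive_systemE)
  \<comment> \<open>z is v transported by the W-invariant form root_form; it pairs positively with P's coroots.\<close>
  define z where "z = (\<Sum>b\<in>R. (rvec b \<bullet> v) *\<^sub>R rvec b)"
  have z_pos: "z \<bullet> rvec (cr a) > 0" if "a \<in> P" for a
  proof -
    have a: "a \<in> R" "rvec a \<bullet> v > 0" using that v positive_subset by auto
    have "z \<bullet> rvec (cr a) = root_form v (rvec (cr a))"
      unfolding z_def root_form_def by (simp add: inner_sum_left)
    then have "2 * (z \<bullet> rvec (cr a)) = (rvec a \<bullet> v) * root_form (rvec (cr a)) (rvec (cr a))"
      using root_form_coroot[OF a(1)] by simp
    then show ?thesis using a(2) root_form_coroot_pos[OF a(1)]
      by (metis mult_pos_pos zero_less_mult_pos zero_less_numeral)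
  qed
  define T where "T = 1 + (\<Sum>a\<in>P. z \<bullet> rvec (cr a))"
  have z_less: "z \<bullet> rvec (cr a) < T" if "a \<in> P" for a
  proof -
    have "z \<bullet> rvec (cr a) \<le> (\<Sum>a\<in>P. z \<bullet> rvec (cr a))"
      using z_pos finite_positive by (intro member_le_sum[OF that]) (auto intro: less_imp_le)
    then show ?thesis by (simp add: T_def)
  qed
  have "T > 0" using z_pos by (simp add: T_def sum_nonneg less_imp_le add_pos_nonneg)
  then have "(1 / T) *\<^sub>R z \<in> base_alcove P cr"
    using z_pos z_less by (simp add: base_alcove_def pairing_def divide_less_eq)
  then show ?thesis by blast
qed

end

section \<open>Length in the finite Weyl group\<close>

lemma positive_from_simple_roots:
  fixes f :: "real ^ 'n::finite \<Rightarrow> real ^ 'n"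
  assumes "finite Q" "linear f" and Q: "\<forall>a\<in>Q. rvec a \<bullet> v > 0"
    and simple: "\<forall>a\<in>simple_roots Q. f (rvec a) \<bullet> v > 0" and "a \<in> Q"
  shows "f (rvec a) \<bullet> v > 0"
  using \<open>a \<in> Q\<close>
proof (induction "card {b\<in>Q. rvec b \<bullet> v < rvec a \<bullet> v}" arbitrary: a rule: less_induct)
  case less
  show ?case
  proof (cases "a \<in> simple_roots Q")
    case True
    then show ?thesis using simple by blast
  next
    case False
    then obtain b c where bc: "b \<in> Q" "c \<in> Q" "a = b + c"
      using less.prems by (auto simp: simple_roots_def)
    have "rvec b \<bullet> v < rvec a \<bullet> v" "rvec c \<bullet> v < rvec a \<bullet> v"
      using Q bc by (auto simp: inner_add_left)
    then have "card {b'\<in>Q. rvec b' \<bullet> v < rvec x \<bullet> v} < card {b\<in>Q. rvec b \<bullet> v < rvec a \<bullet> v}"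
      if "x \<in> {b, c}" for x
      using that bc(1,2) \<open>finite Q\<close> by (intro psubset_card_mono) auto
    then have "f (rvec b) \<bullet> v > 0" "f (rvec c) \<bullet> v > 0"
      using less.hyps bc(1,2) by auto
    then show ?thesis by (simp add: bc(3) linear_add[OF \<open>linear f\<close>] inner_add_left)
  qed
qed

context positive_root_datum
begin

lemma finlen_le_inverse:
  assumes "linear w'" "\<And>x. w' (w x) = x"
  shows "finlen P w \<le> finlen P w'"
proof -
  define N where "N w = {a\<in>P. \<exists>b\<in>P. w (rvec a) = - rvec b}" for w :: "real ^ 'n \<Rightarrow> real ^ 'n"
  define f where "f a = (SOME c. c \<in> P \<and> rvec c = - w (rvec a))" for a
  have f: "f a \<in> P" "rvec (f a) = - w (rvec a)" if "a \<in> N w" for a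
  proof -
    have "\<exists>c. c \<in> P \<and> rvec c = - w (rvec a)" using that by (force simp: N_def)
    then show "f a \<in> P" "rvec (f a) = - w (rvec a)" unfolding f_def by (metis (mono_tags) someI_ex)+
  qed
  have "inj_on f (N w)"
  proof
    fix a a' assume "a \<in> N w" "a' \<in> N w" "f a = f a'"
    then have "w' (w (rvec a)) = w' (w (rvec a'))" using f by (metis neg_equal_iff_equal)
    then show "a = a'" using assms(2) by simp
  qed
  moreover have "f ` N w \<subseteq> N w'"
  proof clarify
    fix a assume a: "a \<in> N w"
    have "w' (rvec (f a)) = - rvec a" using f(2)[OF a] assms by (simp add: linear_neg)
    then show "f a \<in> N w'" using f(1)[OF a] a by (auto simp: N_def)
  qed
  moreover have "finite (N w')" using finite_positive by (simp add: N_def)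
  ultimately have "card (N w) \<le> card (N w')" by (rule card_inj_on_le)
  then show ?thesis by (simp add: finlen_def N_def)
qed

lemma finlen_inverse:
  assumes "linear w" "linear w'" "\<And>x. w' (w x) = x" "\<And>x. w (w' x) = x"
  shows "finlen P w = finlen P w'"
  using finlen_le_inverse[OF assms(2,3)] finlen_le_inverse[OF assms(1,4)] by (rule antisym)

lemma finlen_inv:
  assumes w: "w \<in> weyl R cr" shows "finlen P (inv w) = finlen P w"
  by (rule finlen_inverse[OF weyl_linear[OF weyl_inv[OF w]] weyl_linear[OF w]
        weyl_apply_inv[OF w] weyl_inv_apply[OF w]])

lemma finlen_eq_card_walls_between:
  assumes w: "w \<in> weyl R cr" and v: "\<forall>a\<in>R. rvec a \<bullet> v \<noteq> 0" "P = {a\<in>R. rvec a \<bullet> v > 0}"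
  shows "finlen P w = card (walls_between P (\<lambda>a y. rvec a \<bullet> y) v (adjoint w v))"
proof -
  have key: "(\<exists>b\<in>P. w (rvec a) = - rvec b) \<longleftrightarrow> (rvec a \<bullet> v) * (rvec a \<bullet> adjoint w v) < 0"
    if a: "a \<in> P" for a
  proof -
    have aR: "a \<in> R" using a positive_subset by blast
    obtain d where d: "d \<in> R" "rvec d = w (rvec a)"
      using weyl_maps_root[OF w aR] .
    have "rvec a \<bullet> v > 0" using a v(2) by simp
    then have "(rvec a \<bullet> v) * (rvec a \<bullet> adjoint w v) < 0 \<longleftrightarrow> rvec d \<bullet> v < 0"
      by (simp add: adjoint_works[OF weyl_linear[OF w]] d(2) mult_less_0_iff)
    also have "\<dots> \<longleftrightarrow> - d \<in> P"
      using v(2) uminus_root[OF d(1)] by (simp add: inner_minus_left)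
    also have "\<dots> \<longleftrightarrow> (\<exists>b\<in>P. w (rvec a) = - rvec b)"
    proof -
      have "w (rvec a) = - rvec b \<longleftrightarrow> b = - d" for b
      proof -
        have "w (rvec a) = - rvec b \<longleftrightarrow> rvec d = rvec (- b)" by (simp add: d(2))
        also have "\<dots> \<longleftrightarrow> b = - d" by (simp only: rvec_eq_iff equation_minus_iff)
        finally show ?thesis .
      qed
      then show ?thesis by auto
    qed
    finally show ?thesis by simp
  qed
  have "{a\<in>P. \<exists>b\<in>P. w (rvec a) = - rvec b} = walls_between P (\<lambda>a y. rvec a \<bullet> y) v (adjoint w v)"
    unfolding walls_between_def
  proof (rule Collect_cong)
    show "(a \<in> P \<and> (\<exists>b\<in>P. w (rvec a) = - rvec b)) \<longleftrightarrow>
        (a \<in> P \<and> (rvec a \<bullet> v) * (rvec a \<bullet> adjoint w v) < 0)" for a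
      using key[of a] by blast
  qed
  then show ?thesis by (simp add: finlen_def)
qed

lemma coroot_wall_reflection:
  assumes "\<alpha> \<in> P"
  shows "wall_reflection P (\<lambda>a y. rvec a \<bullet> y) (corefl \<alpha> (cr \<alpha>)) \<alpha>"
proof
  let ?s = "corefl \<alpha> (cr \<alpha>)"
  have \<alpha>R: "\<alpha> \<in> R" using assms positive_subset by blast
  have \<alpha>2: "pairing (rvec \<alpha>) (cr \<alpha>) = 2" using pairing_root_coroot[OF \<alpha>R] .
  show "?s (?s v) = v" for v using corefl_involution[OF \<alpha>2] .
  show "\<alpha> \<in> P" by fact
  show "rvec \<alpha> \<bullet> ?s v = - (rvec \<alpha> \<bullet> v)" for v
    using \<alpha>2 by (simp add: corefl_def pairing_def inner_diff_right)
  show "\<exists>c. \<forall>v. rvec i \<bullet> ?s v = rvec i \<bullet> v - c * (rvec \<alpha> \<bullet> v)" for i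
    by (auto simp: corefl_def inner_diff_right)
  show "\<exists>j\<in>P. \<exists>e\<in>{1, -1}. \<forall>v. rvec j \<bullet> ?s v = e * (rvec i \<bullet> v)" if "i \<in> P" for i
  proof -
    have iR: "i \<in> R" using that positive_subset by blast
    obtain d where d: "d \<in> R" "rvec d = refl \<alpha> (cr \<alpha>) (rvec i)"
      using reflected_root[OF iR \<alpha>R] .
    have eq: "rvec d \<bullet> ?s v = rvec i \<bullet> v" for v
      unfolding inner_refl_left[symmetric] d(2) refl_involution[OF \<alpha>2] ..
    from root_positive_or_negative[OF d(1)] show ?thesis
    proof
      assume "d \<in> P"
      then show ?thesis by (intro bexI[of _ d] bexI[of _ 1]) (simp_all add: eq)
    next
      assume "- d \<in> P"
      then show ?thesis by (intro bexI[of _ "- d"] bexI[of _ "-1"]) (simp_all add: eq inner_minus_left)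
    qed
  qed
  show "i = j" if "i \<in> P" "j \<in> P" "e \<in> {1, -1}" "\<forall>v. rvec i \<bullet> v = e * (rvec j \<bullet> v)" for i j e
  proof -
    have "\<forall>v. rvec i \<bullet> v = (e *\<^sub>R rvec j) \<bullet> v" using that(4) by simp
    then have "rvec i = e *\<^sub>R rvec j" by (simp only: vector_eq_rdot)
    with that(3) have "i = j \<or> i = - j" by (auto simp flip: rvec_minus)
    then show ?thesis using that(1,2) positive_uminus by blast
  qed
qed

lemma finlen_refl_comp_less:
  assumes u: "u \<in> weyl R cr" and "\<alpha> \<in> P" and d: "d \<in> R" "d \<notin> P" "rvec d = inv u (rvec \<alpha>)"
  shows "finlen P (refl \<alpha> (cr \<alpha>) \<circ> u) < finlen P u"
proof -
  let ?s = "refl \<alpha> (cr \<alpha>)" and ?r = "corefl \<alpha> (cr \<alpha>)" and ?u' = "inv u"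
  let ?walls = "walls_between P (\<lambda>a y. rvec a \<bullet> y)"
  interpret wall_reflection P "\<lambda>a y. rvec a \<bullet> y" ?r \<alpha>
    using coroot_wall_reflection[OF \<open>\<alpha> \<in> P\<close>] .
  have \<alpha>R: "\<alpha> \<in> R" using \<open>\<alpha> \<in> P\<close> positive_subset by blast
  have \<alpha>2: "pairing (rvec \<alpha>) (cr \<alpha>) = 2" using pairing_root_coroot[OF \<alpha>R] .
  obtain v where v: "\<forall>a\<in>R. rvec a \<bullet> v \<noteq> 0" "P = {a\<in>R. rvec a \<bullet> v > 0}"
    by (rule positive_systemE)
  have u': "?u' \<in> weyl R cr" using weyl_inv[OF u] .
  have lin: "linear ?u'" using weyl_linear[OF u'] .
  define z where "z = adjoint ?u' v"
  have z: "x \<bullet> z = ?u' x \<bullet> v" for x by (simp add: z_def adjoint_works[OF lin])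
  have z_nonzero: "rvec a \<bullet> z \<noteq> 0" if a: "a \<in> R" for a
  proof -
    obtain b where "b \<in> R" "rvec b = ?u' (rvec a)" using weyl_maps_root[OF u' a] .
    then show ?thesis using v(1) z by metis
  qed
  have neg: "rvec \<alpha> \<bullet> z < 0" using v d z_nonzero[OF \<alpha>R] by (auto simp: z)
  have "finlen P (?s \<circ> u) = finlen P (?u' \<circ> ?s)"
    by (rule finlen_inverse)
      (simp_all add: linear_compose lin refl_linear weyl_linear[OF u] refl_involution[OF \<alpha>2]
        weyl_inv_apply[OF u] weyl_apply_inv[OF u])
  also have "\<dots> = card (?walls v (?r z))"
  proof -
    have "x \<bullet> adjoint (?u' \<circ> ?s) v = x \<bullet> ?r z" for x
      by (simp add: adjoint_works[OF linear_compose[OF refl_linear lin]] z inner_refl_left[symmetric])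
    then have "adjoint (?u' \<circ> ?s) v = ?r z" by (metis vector_eq_ldot)
    then show ?thesis
      using finlen_eq_card_walls_between[OF weyl_comp[OF u' weyl_refl[OF \<alpha>R]] v] by simp
  qed
  also have "\<dots> < card (?walls v (?r (?r z)))"
  proof (rule card_walls_between_reflect_less)
    show "\<forall>i\<in>P. rvec i \<bullet> v \<noteq> 0" using v by auto
    show "\<forall>i\<in>P. rvec i \<bullet> ?r (?r z) \<noteq> 0" using z_nonzero positive_subset by (auto simp: involution)
    show "(rvec \<alpha> \<bullet> v) * (rvec \<alpha> \<bullet> ?r z) > 0"
      using wall_flip[of z] neg \<open>\<alpha> \<in> P\<close> v(2) by (simp add: mult_pos_neg)
    show "finite (?walls v (?r (?r z)))" using finite_positive by (simp add: walls_between_def)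
  qed
  also have "\<dots> = finlen P u"
    using finlen_eq_card_walls_between[OF u' v] finlen_inv[OF u] by (simp add: z_def involution)
  finally show ?thesis .
qed

lemma positive_of_finlen_less:
  assumes u: "u \<in> weyl R cr" and "\<alpha> \<in> P" and len: "finlen P u < finlen P (refl \<alpha> (cr \<alpha>) \<circ> u)"
  obtains b where "b \<in> P" "rvec b = inv u (rvec \<alpha>)"
proof -
  have "\<alpha> \<in> R" using \<open>\<alpha> \<in> P\<close> positive_subset by blast
  obtain d where d: "d \<in> R" "rvec d = inv u (rvec \<alpha>)"
    using weyl_maps_root[OF weyl_inv[OF u] \<open>\<alpha> \<in> R\<close>] .
  then have "d \<in> P" using finlen_refl_comp_less[OF u \<open>\<alpha> \<in> P\<close>] len by fastforce
  then show ?thesis using that d(2) by blast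
qed

lemma WM_set_inv_positive:
  assumes uW: "u \<in> WM_set R RM P cr" and a: "a \<in> P \<inter> RM"
  obtains b where "b \<in> P" "rvec b = inv u (rvec a)" "\<And>z. inv u z \<bullet> rvec (cr b) = z \<bullet> rvec (cr a)"
proof -
  obtain v where v: "\<forall>a\<in>R. rvec a \<bullet> v \<noteq> 0" "P = {a\<in>R. rvec a \<bullet> v > 0}"
    by (rule positive_systemE)
  have u: "u \<in> weyl R cr" using uW by (simp add: WM_set_def)
  have "inv u (rvec \<alpha>) \<bullet> v > 0" if "\<alpha> \<in> simple_roots (P \<inter> RM)" for \<alpha>
  proof -
    have "\<alpha> \<in> P" using that by (simp add: simple_roots_def)
    moreover have "finlen P u < finlen P (refl \<alpha> (cr \<alpha>) \<circ> u)"
      using uW that by (simp add: WM_set_def)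
    ultimately obtain b where "b \<in> P" "rvec b = inv u (rvec \<alpha>)"
      using positive_of_finlen_less[OF u] by metis
    then show ?thesis using v(2) by auto
  qed
  moreover have "finite (P \<inter> RM)" using finite_positive by simp
  moreover have "\<forall>a\<in>P \<inter> RM. rvec a \<bullet> v > 0" using v(2) by simp
  ultimately have "inv u (rvec a) \<bullet> v > 0"
    using positive_from_simple_roots[OF _ weyl_linear[OF weyl_inv[OF u]] _ _ a] by blast
  moreover obtain d where "d \<in> R" "rvec d = inv u (rvec a)"
    "\<And>z. inv u z \<bullet> rvec (cr d) = z \<bullet> rvec (cr a)"
    using weyl_transport_root[OF weyl_inv[OF u]] a positive_subset by blast
  ultimately show ?thesis using that v(2) by auto
qed

end

section \<open>Length in the extended affine Weyl group\<close>

text \<open>The pair (a, k) stands for the affine root a - k, whose zero set is the wall H_(a,k).\<close>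

definition affine_root :: "(int ^ 'n \<Rightarrow> int ^ 'n) \<Rightarrow> (int ^ 'n) \<times> int \<Rightarrow> real ^ 'n \<Rightarrow> real" where
  "affine_root cr ak v = pairing v (cr (fst ak)) - of_int (snd ak)"

lemma affine_root_apply [simp]: "affine_root cr (a, k) v = v \<bullet> rvec (cr a) - of_int k"
  by (simp add: affine_root_def pairing_def)

lemma eact_emult: "linear (snd x) \<Longrightarrow> eact (emult x y) v = eact x (eact y v)"
  by (simp add: eact_def emult_def linear_add)

lemma eact_affrefl: "eact (affrefl cr b m) v = v - affine_root cr (b, m) v *\<^sub>R rvec b"
  by (simp add: eact_def affrefl_def refl_def pairing_def algebra_simps)

lemma affine_root_affrefl:
  "affine_root cr (a, k) (eact (affrefl cr b m) v)
     = affine_root cr (a, k) v - (rvec b \<bullet> rvec (cr a)) * affine_root cr (b, m) v"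
  unfolding eact_affrefl by (simp add: inner_diff_left algebra_simps)

lemma linear_snd_affrefl: "linear (snd (affrefl cr a k))"
  by (simp add: affrefl_def refl_linear)

lemma ext_weyl_affrefl:
  assumes "y \<in> ext_weyl S cr" "a \<in> S"
  shows "emult (affrefl cr a k) y \<in> ext_weyl S cr"
proof -
  obtain lam w where y: "y = (lam, w)" "lam \<in> lattice" "w \<in> weyl S cr"
    using assms(1) by (auto simp: ext_weyl_def)
  have "of_int k *\<^sub>R rvec a + refl a (cr a) lam \<in> lattice"
    by (intro lattice_add lattice_scaleR_int rvec_in_lattice lattice_refl y(2))
  moreover have "refl a (cr a) \<circ> w \<in> weyl S cr" using y(3) assms(2) by (rule weyl.weyl_step)
  ultimately show ?thesis by (simp add: ext_weyl_def emult_def affrefl_def y)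
qed

lemma finite_affine_walls_between:
  assumes "finite Q"
  shows "finite (walls_between (Q \<times> UNIV) (affine_root cr) p q)"
proof -
  define M where "M a = \<bar>p \<bullet> rvec (cr a)\<bar> + \<bar>q \<bullet> rvec (cr a)\<bar>" for a
  have "walls_between (Q \<times> UNIV) (affine_root cr) p q \<subseteq> (SIGMA a:Q. {-\<lceil>M a\<rceil>..\<lceil>M a\<rceil>})"
  proof
    fix i assume i: "i \<in> walls_between (Q \<times> UNIV) (affine_root cr) p q"
    obtain a k where ak: "i = (a, k)" by fastforce
    have "a \<in> Q" "(p \<bullet> rvec (cr a) - of_int k) * (q \<bullet> rvec (cr a) - of_int k) < 0"
      using i by (auto simp: ak walls_between_def)
    moreover have "\<bar>of_int k\<bar> \<le> M a" using calculation(2) by (auto simp: M_def mult_less_0_iff)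
    ultimately show "i \<in> (SIGMA a:Q. {-\<lceil>M a\<rceil>..\<lceil>M a\<rceil>})"
      unfolding ak by (auto simp: abs_le_iff) linarith+
  qed
  moreover have "finite (SIGMA a:Q. {-\<lceil>M a\<rceil>..\<lceil>M a\<rceil>})" using assms by auto
  ultimately show ?thesis by (rule finite_subset)
qed

lemma bruhat_stepI:
  "a \<in> P \<Longrightarrow> afflen P cr x < afflen P cr (emult (affrefl cr a k) x)
    \<Longrightarrow> (x, emult (affrefl cr a k) x) \<in> bruhat_step P cr"
  unfolding bruhat_step_def by blast

lemma bruhat_stepE:
  assumes "(x, y) \<in> bruhat_step P cr"
  obtains a k where "y = emult (affrefl cr a k) x" "a \<in> P"
    "afflen P cr x < afflen P cr (emult (affrefl cr a k) x)"
  using assms unfolding bruhat_step_def by blast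

lemma Ints_plus_unit_interval_same_sign:
  fixes N t t' :: real
  assumes "N \<in> \<int>" "0 < t" "t < 1" "0 < t'" "t' < 1"
  shows "(N + t) * (N + t') > 0"
proof -
  obtain n where "N = of_int n" using assms(1) by (rule Ints_cases)
  then show ?thesis
    using assms(2-5) by (cases "n \<ge> 0") (auto intro!: mult_pos_pos mult_neg_neg)
qed

context root_datum
begin

lemma affine_root_affrefl_self:
  "b \<in> R \<Longrightarrow> affine_root cr (b, m) (eact (affrefl cr b m) v) = - affine_root cr (b, m) v"
  using affine_root_affrefl[of cr b m b m v] inner_root_coroot by simp

lemma affrefl_involution:
  assumes "b \<in> R"
  shows "eact (affrefl cr b m) (eact (affrefl cr b m) v) = v"
proof -
  let ?r = "eact (affrefl cr b m)"
  have "?r (?r v) = ?r v - affine_root cr (b, m) (?r v) *\<^sub>R rvec b" by (rule eact_affrefl)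
  also have "\<dots> = v"
    unfolding affine_root_affrefl_self[OF assms] by (simp add: eact_affrefl algebra_simps)
  finally show ?thesis .
qed

lemma affine_root_affrefl_moved:
  assumes "a \<in> R" "b \<in> R"
  obtains a' k' where "a' \<in> R" "\<And>v. affine_root cr (a', k') (eact (affrefl cr b m) v) = affine_root cr (a, k) v"
proof -
  let ?r = "eact (affrefl cr b m)"
  obtain a' where a': "a' \<in> R" "rvec a' = refl b (cr b) (rvec a)"
    using reflected_root[OF assms] .
  have ca': "rvec (cr a') = corefl b (cr b) (rvec (cr a))"
    using coroot_reflected_root[OF assms a'] .
  obtain n where n: "rvec b \<bullet> rvec (cr a) = of_int n"
    using inner_rvec_Ints by (metis Ints_cases)
  have "affine_root cr (a', k - m * n) v = affine_root cr (a, k) (?r v)" for v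
  proof -
    have "affine_root cr (a, k) (?r v) = affine_root cr (a, k) v - of_int n * affine_root cr (b, m) v"
      using affine_root_affrefl[of cr a k b m v] by (simp only: n)
    then show ?thesis by (simp add: ca' n corefl_def inner_diff_right algebra_simps)
  qed
  then show ?thesis using that[OF a'(1)] affrefl_involution[OF assms(2)] by metis
qed

end

context positive_root_datum
begin

lemma affine_walls_permuted:
  assumes "a \<in> P" "b \<in> P"
  shows "\<exists>j\<in>P \<times> UNIV. \<exists>e\<in>{1, -1}. \<forall>v. affine_root cr j (eact (affrefl cr b m) v) = e * affine_root cr (a, k) v"
proof -
  obtain a' k' where a': "a' \<in> R"
    and moved: "\<And>v. affine_root cr (a', k') (eact (affrefl cr b m) v) = affine_root cr (a, k) v"
    using affine_root_affrefl_moved assms positive_subset by blast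
  from root_positive_or_negative[OF a'(1)] show ?thesis
  proof
    assume "a' \<in> P"
    then show ?thesis using moved by (intro bexI[of _ "(a', k')"] bexI[of _ 1]) auto
  next
    assume "- a' \<in> P"
    have "affine_root cr (- a', - k') v = - affine_root cr (a', k') v" for v
      using coroot_uminus[OF a'(1)] by simp
    then have "affine_root cr (- a', - k') (eact (affrefl cr b m) v) = -1 * affine_root cr (a, k) v" for v
      using moved[of v] by simp
    with \<open>- a' \<in> P\<close> show ?thesis by (intro bexI[of _ "(- a', - k')"] bexI[of _ "-1"]) auto
  qed
qed

lemma affine_walls_distinct:
  assumes "i \<in> P \<times> UNIV" "j \<in> P \<times> UNIV" "e \<in> {1, -1}"
    and eq: "\<forall>v. affine_root cr i v = e * affine_root cr j v"
  shows "i = j"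
proof -
  obtain a k c l where ij: "i = (a, k)" "j = (c, l)" "a \<in> P" "c \<in> P" using assms(1,2) by auto
  have aR: "a \<in> R" and cR: "c \<in> R" using ij positive_subset by auto
  have kl: "of_int k = e * of_int l" using eq[rule_format, of 0] by (simp add: ij)
  have "\<forall>v. v \<bullet> rvec (cr a) = v \<bullet> (e *\<^sub>R rvec (cr c))"
    using eq kl by (simp add: ij algebra_simps)
  then have coroots: "rvec (cr a) = e *\<^sub>R rvec (cr c)" by (simp only: vector_eq_ldot)
  from \<open>e \<in> {1, -1}\<close> show ?thesis
  proof
    assume "e = 1"
    then have "a = c" using coroots inj_onD[OF coroot_inj _ aR cR] by simp
    then show ?thesis using kl \<open>e = 1\<close> ij by simp
  next
    assume "e \<in> {-1}"
    then have "cr a = cr (- c)" using coroots coroot_uminus[OF cR] by (simp flip: rvec_minus)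
    then have "a = - c" using inj_onD[OF coroot_inj _ aR uminus_root[OF cR]] by simp
    then show ?thesis using positive_uminus ij by blast
  qed
qed

lemma affine_wall_reflection:
  assumes "b \<in> P"
  shows "wall_reflection (P \<times> UNIV) (affine_root cr) (eact (affrefl cr b m)) (b, m)"
proof
  have bR: "b \<in> R" using assms positive_subset by blast
  show "eact (affrefl cr b m) (eact (affrefl cr b m) v) = v" for v
    using affrefl_involution[OF bR] .
  show "(b, m) \<in> P \<times> UNIV" using assms by simp
  show "affine_root cr (b, m) (eact (affrefl cr b m) v) = - affine_root cr (b, m) v" for v
    using affine_root_affrefl_self[OF bR] .
  show "\<exists>c. \<forall>v. affine_root cr i (eact (affrefl cr b m) v)
      = affine_root cr i v - c * affine_root cr (b, m) v" for i
    using affine_root_affrefl[of cr "fst i" "snd i" b m] by (metis prod.collapse)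
  show "\<exists>j\<in>P \<times> UNIV. \<exists>e\<in>{1, -1}. \<forall>v. affine_root cr j (eact (affrefl cr b m) v) = e * affine_root cr i v"
    if "i \<in> P \<times> UNIV" for i
    using affine_walls_permuted[OF _ assms, of "fst i" m "snd i"] that by auto
  show "i = j" if "i \<in> P \<times> UNIV" "j \<in> P \<times> UNIV" "e \<in> {1, -1}"
    "\<forall>v. affine_root cr i v = e * affine_root cr j v" for i j e
    using affine_walls_distinct that by blast
qed

lemma alcove_in_chamber:
  assumes "x \<in> ext_weyl R cr"
  shows "in_chamber (P \<times> UNIV) (affine_root cr) (eact x ` base_alcove P cr)"
  unfolding in_chamber_def
proof (intro ballI)
  fix i :: "(int ^ 'n) \<times> int" and q q'
  assume "i \<in> P \<times> UNIV" "q \<in> eact x ` base_alcove P cr" "q' \<in> eact x ` base_alcove P cr"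
  obtain a k where i: "i = (a, k)" "a \<in> P" using \<open>i \<in> P \<times> UNIV\<close> by auto
  obtain lam w where x: "x = (lam, w)" "lam \<in> lattice" "w \<in> weyl R cr"
    using assms by (auto simp: ext_weyl_def)
  obtain p p' where p: "p \<in> base_alcove P cr" "p' \<in> base_alcove P cr" "q = lam + w p" "q' = lam + w p'"
    using \<open>q \<in> _\<close> \<open>q' \<in> _\<close> by (auto simp: x eact_def)
  have aR: "a \<in> R" using i(2) positive_subset by blast
  obtain b where b: "b \<in> R" "\<And>z. inv w z \<bullet> rvec (cr b) = z \<bullet> rvec (cr a)"
    using weyl_transport_root[OF weyl_inv[OF x(3)] aR] by blast
  define N where "N = lam \<bullet> rvec (cr a) - of_int k"
  have N: "N \<in> \<int>" using lattice_inner_Ints[OF x(2)] by (simp add: N_def)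
  have shift: "affine_root cr i (lam + w y) = N + y \<bullet> rvec (cr b)" for y
    using b(2)[of "w y"] by (simp add: i N_def inner_add_left weyl_inv_apply[OF x(3)])
  from root_positive_or_negative[OF b(1)] show "affine_root cr i q * affine_root cr i q' > 0"
  proof
    assume "b \<in> P"
    then show ?thesis
      using p Ints_plus_unit_interval_same_sign[OF N]
      by (simp add: shift base_alcove_def pairing_def)
  next
    assume "- b \<in> P"
    have unit: "0 < y \<bullet> rvec (cr b) + 1" "y \<bullet> rvec (cr b) + 1 < 1" if "y \<in> base_alcove P cr" for y
      using that \<open>- b \<in> P\<close> coroot_uminus[OF b(1)] by (auto simp: base_alcove_def pairing_def)
    have "(N - 1 + (p \<bullet> rvec (cr b) + 1)) * (N - 1 + (p' \<bullet> rvec (cr b) + 1)) > 0"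
      using N unit[OF p(1)] unit[OF p(2)] by (intro Ints_plus_unit_interval_same_sign) auto
    then show ?thesis by (simp add: shift p(3,4))
  qed
qed

lemma base_alcove_in_chamber: "in_chamber (P \<times> UNIV) (affine_root cr) (base_alcove P cr)"
  using alcove_in_chamber[of "(0, id)"] weyl.weyl_id[of R cr] zero_in_lattice
  by (simp add: ext_weyl_def eact_def)

lemma afflen_eq_card_walls_between:
  assumes "x \<in> ext_weyl R cr" "p \<in> base_alcove P cr" "q \<in> eact x ` base_alcove P cr"
  shows "afflen P cr x = card (walls_between (P \<times> UNIV) (affine_root cr) p q)"
proof -
  have "{(a, k). a \<in> P \<and> separates (cr a) k (base_alcove P cr) (eact x ` base_alcove P cr)}
      = {i \<in> P \<times> UNIV. \<forall>p'\<in>base_alcove P cr. \<forall>q'\<in>eact x ` base_alcove P cr.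
           affine_root cr i p' * affine_root cr i q' < 0}"
    by (auto simp: separates_def pairing_def)
  also have "\<dots> = walls_between (P \<times> UNIV) (affine_root cr) p q"
    by (rule walls_between_chambers[OF base_alcove_in_chamber alcove_in_chamber[OF assms(1)] assms(2,3)])
  finally show ?thesis by (simp add: afflen_def)
qed

lemma afflen_less_affrefl_iff:
  assumes x: "x \<in> ext_weyl R cr" and "a \<in> P"
    and p: "p \<in> base_alcove P cr" and q: "q \<in> eact x ` base_alcove P cr"
  shows "afflen P cr x < afflen P cr (emult (affrefl cr a k) x)
           \<longleftrightarrow> affine_root cr (a, k) p * affine_root cr (a, k) q > 0"
proof -
  let ?r = "eact (affrefl cr a k)" and ?walls = "walls_between (P \<times> UNIV) (affine_root cr) p"
  interpret wall_reflection "P \<times> UNIV" "affine_root cr" ?r "(a, k)"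
    using affine_wall_reflection[OF \<open>a \<in> P\<close>] .
  have aR: "a \<in> R" using \<open>a \<in> P\<close> positive_subset by blast
  have sx: "emult (affrefl cr a k) x \<in> ext_weyl R cr" using ext_weyl_affrefl[OF x aR] .
  have rq: "?r q \<in> eact (emult (affrefl cr a k) x) ` base_alcove P cr"
    using q by (auto simp: eact_emult[OF linear_snd_affrefl])
  have len: "afflen P cr x = card (?walls q)"
    "afflen P cr (emult (affrefl cr a k) x) = card (?walls (?r q))"
    using afflen_eq_card_walls_between[OF x p q] afflen_eq_card_walls_between[OF sx p rq] by auto
  have nonzero: "\<forall>i\<in>P \<times> UNIV. affine_root cr i p \<noteq> 0" "\<forall>i\<in>P \<times> UNIV. affine_root cr i q \<noteq> 0"
    "\<forall>i\<in>P \<times> UNIV. affine_root cr i (?r q) \<noteq> 0"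
    using in_chamber_nonzero[OF base_alcove_in_chamber _ p] in_chamber_nonzero[OF alcove_in_chamber[OF x] _ q]
      in_chamber_nonzero[OF alcove_in_chamber[OF sx] _ rq] by blast+
  have fin: "finite (?walls y)" for y using finite_affine_walls_between[OF finite_positive] .
  show ?thesis
  proof
    assume longer: "afflen P cr x < afflen P cr (emult (affrefl cr a k) x)"
    show "affine_root cr (a, k) p * affine_root cr (a, k) q > 0"
    proof (rule ccontr)
      assume "\<not> ?thesis"
      moreover have "affine_root cr (a, k) p * affine_root cr (a, k) q \<noteq> 0"
        using nonzero \<open>a \<in> P\<close> by simp
      ultimately have "affine_root cr (a, k) p * affine_root cr (a, k) q < 0" by linarith
      then have "affine_root cr (a, k) p * affine_root cr (a, k) (?r q) > 0"
        unfolding wall_flip by (simp del: affine_root_apply)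
      then have "card (?walls (?r q)) < card (?walls (?r (?r q)))"
        using nonzero fin by (intro card_walls_between_reflect_less) (auto simp: involution)
      then show False using longer len by (simp add: involution)
    qed
  next
    assume "affine_root cr (a, k) p * affine_root cr (a, k) q > 0"
    then have "card (?walls q) < card (?walls (?r q))"
      using nonzero fin by (intro card_walls_between_reflect_less) auto
    then show "afflen P cr x < afflen P cr (emult (affrefl cr a k) x)" using len by simp
  qed
qed

section \<open>Conjugation by elements of W^M\<close>

lemma WM_set_maps_base_alcove:
  assumes uW: "u \<in> WM_set R RM P cr" and p: "p \<in> base_alcove P cr"
  shows "u p \<in> base_alcove (P \<inter> RM) cr"
  unfolding base_alcove_def pairing_def
proof (intro CollectI ballI)
  fix a assume "a \<in> P \<inter> RM"
  then obtain b where b: "b \<in> P" "\<And>z. inv u z \<bullet> rvec (cr b) = z \<bullet> rvec (cr a)"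
    using WM_set_inv_positive[OF uW] by metis
  have "u \<in> weyl R cr" using uW by (simp add: WM_set_def)
  then have "u p \<bullet> rvec (cr a) = p \<bullet> rvec (cr b)" using b(2)[of "u p"] by (simp add: weyl_inv_apply)
  then show "0 < u p \<bullet> rvec (cr a) \<and> u p \<bullet> rvec (cr a) < 1"
    using p b(1) by (simp add: base_alcove_def pairing_def)
qed

end

definition weyl_conj :: "(real ^ 'n \<Rightarrow> real ^ 'n) \<Rightarrow> ('n::finite) ewel \<Rightarrow> 'n ewel" where
  "weyl_conj u x = emult (0, inv u) (emult x (0, u))"

lemma weyl_conj_eq:
  "linear (inv u) \<Longrightarrow> linear w \<Longrightarrow> weyl_conj u (lam, w) = (inv u lam, inv u \<circ> w \<circ> u)"
  by (simp add: weyl_conj_def emult_def linear_0 comp_assoc)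

lemma weyl_conj_affrefl:
  assumes lin: "linear (inv u)" and "linear w"
    and b: "rvec b = inv u (rvec a)" "\<And>v. inv u v \<bullet> rvec (cr b) = v \<bullet> rvec (cr a)"
  shows "weyl_conj u (emult (affrefl cr a k) (lam, w)) = emult (affrefl cr b k) (weyl_conj u (lam, w))"
proof -
  have refl_conj: "inv u (refl a (cr a) v) = refl b (cr b) (inv u v)" for v
    using b(1) b(2)[of v] by (simp add: refl_def pairing_def linear_diff[OF lin] linear_cmul[OF lin])
  have "weyl_conj u (emult (affrefl cr a k) (lam, w))
      = (inv u (of_int k *\<^sub>R rvec a + refl a (cr a) lam), inv u \<circ> (refl a (cr a) \<circ> w) \<circ> u)"
    using weyl_conj_eq[OF lin linear_compose[OF \<open>linear w\<close> refl_linear]]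
    by (simp add: affrefl_def emult_def)
  also have "\<dots> = emult (affrefl cr b k) (weyl_conj u (lam, w))"
    by (simp add: weyl_conj_eq[OF lin \<open>linear w\<close>] affrefl_def emult_def
        linear_add[OF lin] linear_cmul[OF lin] refl_conj b(1) comp_def)
  finally show ?thesis .
qed

context positive_root_datum
begin

lemma weyl_conj_ext_weyl:
  assumes "u \<in> weyl R cr" "RM \<subseteq> R" "x \<in> ext_weyl RM cr"
  shows "weyl_conj u x \<in> ext_weyl R cr"
proof -
  obtain lam w where x: "x = (lam, w)" "lam \<in> lattice" "w \<in> weyl RM cr"
    using assms(3) by (auto simp: ext_weyl_def)
  have "inv u \<circ> w \<circ> u \<in> weyl R cr"
    by (intro weyl_comp weyl_inv assms(1) weyl_mono[OF x(3) assms(2)])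
  moreover have "weyl_conj u x = (inv u lam, inv u \<circ> w \<circ> u)"
    using weyl_conj_eq[OF weyl_linear[OF weyl_inv[OF assms(1)]] weyl_linear[OF x(3)]] x(1) by simp
  ultimately show ?thesis
    using weyl_lattice[OF weyl_inv[OF assms(1)] x(2)] by (simp add: ext_weyl_def)
qed

lemma bruhat_step_weyl_conj:
  assumes levi: "levi_roots R RM" and uW: "u \<in> WM_set R RM P cr"
    and y: "y \<in> ext_weyl RM cr" and step: "(y, z) \<in> bruhat_step (P \<inter> RM) cr"
  shows "(weyl_conj u y, weyl_conj u z) \<in> bruhat_step P cr"
proof -
  interpret M: positive_root_datum RM cr "P \<inter> RM"
    using levi_positive_root_datum[OF levi] .
  have RM: "RM \<subseteq> R" using levi by (simp add: levi_roots_def)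
  have u: "u \<in> weyl R cr" using uW by (simp add: WM_set_def)
  have lin: "linear (inv u)" using weyl_linear[OF weyl_inv[OF u]] .
  obtain a k where z: "z = emult (affrefl cr a k) y" and a: "a \<in> P \<inter> RM"
    and longer: "afflen (P \<inter> RM) cr y < afflen (P \<inter> RM) cr z"
    using step by (rule bruhat_stepE) simp
  obtain b where b: "b \<in> P" "rvec b = inv u (rvec a)" "\<And>v. inv u v \<bullet> rvec (cr b) = v \<bullet> rvec (cr a)"
    by (rule WM_set_inv_positive[OF uW a], rule that)
  obtain lam w where yy: "y = (lam, w)" "lam \<in> lattice" "w \<in> weyl RM cr"
    using y by (auto simp: ext_weyl_def)
  have y': "weyl_conj u y \<in> ext_weyl R cr" using weyl_conj_ext_weyl[OF u RM y] .
  have z': "weyl_conj u z = emult (affrefl cr b k) (weyl_conj u y)"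
    unfolding z yy(1) using weyl_conj_affrefl[OF lin weyl_linear[OF yy(3)] b(2,3)] .
  obtain p where p: "p \<in> base_alcove P cr" using base_alcove_nonempty by blast
  have up: "u p \<in> base_alcove (P \<inter> RM) cr" using WM_set_maps_base_alcove[OF uW p] .
  have walls: "affine_root cr (b, k) (inv u v) = affine_root cr (a, k) v" for v
    using b(3) by simp
  have "affine_root cr (a, k) (u p) * affine_root cr (a, k) (eact y (u p)) > 0"
    using M.afflen_less_affrefl_iff[OF y a up, of "eact y (u p)" k] longer up by (simp add: z)
  moreover have "eact (weyl_conj u y) p = inv u (eact y (u p))"
    by (simp add: yy weyl_conj_eq[OF lin weyl_linear[OF yy(3)]] eact_def linear_add[OF lin])
  ultimately have "affine_root cr (b, k) p * affine_root cr (b, k) (eact (weyl_conj u y) p) > 0"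
    using walls[of "u p"] walls[of "eact y (u p)"] by (simp add: weyl_inv_apply[OF u])
  then have "afflen P cr (weyl_conj u y) < afflen P cr (emult (affrefl cr b k) (weyl_conj u y))"
    using afflen_less_affrefl_iff[OF y' b(1) p] p by blast
  then show ?thesis unfolding z' by (rule bruhat_stepI[OF b(1)])
qed

lemma bruhat_le_weyl_conj:
  assumes levi: "levi_roots R RM" and uW: "u \<in> WM_set R RM P cr"
    and le: "bruhat_le (P \<inter> RM) cr x y" and x: "x \<in> ext_weyl RM cr"
  shows "bruhat_le P cr (weyl_conj u x) (weyl_conj u y)"
proof -
  have "(weyl_conj u x, weyl_conj u y) \<in> (bruhat_step P cr)\<^sup>* \<and> y \<in> ext_weyl RM cr"
    using le unfolding bruhat_le_def
  proof (induction rule: rtrancl_induct)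
    case base
    then show ?case using x by simp
  next
    case (step y z)
    then have "(weyl_conj u y, weyl_conj u z) \<in> bruhat_step P cr"
      using bruhat_step_weyl_conj[OF levi uW] by blast
    moreover have "z \<in> ext_weyl RM cr"
      using step(2)
    proof (rule bruhat_stepE)
      fix a k assume "z = emult (affrefl cr a k) y" "a \<in> P \<inter> RM"
      then show ?thesis using ext_weyl_affrefl[of y RM cr a k] step.IH by simp
    qed
    ultimately show ?case using step by auto
  qed
  then show ?thesis by (simp add: bruhat_le_def)
qed

lemma Adm_weyl_conj:
  assumes levi: "levi_roots R RM" and uW: "u \<in> WM_set R RM P cr"
  shows "weyl_conj u ` Adm RM (P \<inter> RM) cr lam \<subseteq> Adm R P cr lam"
proof (rule image_subsetI)
  fix x assume "x \<in> Adm RM (P \<inter> RM) cr lam"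
  then obtain w where x: "x \<in> ext_weyl RM cr" and w: "w \<in> weyl RM cr"
    and le: "bruhat_le (P \<inter> RM) cr x (w (rvec lam), id)"
    by (auto simp: Adm_def)
  have u: "u \<in> weyl R cr" using uW by (simp add: WM_set_def)
  have RM: "RM \<subseteq> R" using levi by (simp add: levi_roots_def)
  have "weyl_conj u (w (rvec lam), id) = ((inv u \<circ> w) (rvec lam), inv u \<circ> id \<circ> u)"
    using weyl_conj_eq[OF weyl_linear[OF weyl_inv[OF u]] linear_id] by simp
  also have "\<dots> = ((inv u \<circ> w) (rvec lam), id)"
    by (simp add: fun_eq_iff weyl_inv_apply[OF u])
  finally have "weyl_conj u (w (rvec lam), id) = ((inv u \<circ> w) (rvec lam), id)" .
  moreover have "inv u \<circ> w \<in> weyl R cr" using weyl_comp[OF weyl_inv[OF u] weyl_mono[OF w RM]] .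
  ultimately have "\<exists>w'\<in>weyl R cr. bruhat_le P cr (weyl_conj u x) (w' (rvec lam), id)"
    using bruhat_le_weyl_conj[OF levi uW le x] by (metis comp_apply)
  then show "weyl_conj u x \<in> Adm R P cr lam"
    using weyl_conj_ext_weyl[OF u RM x] by (simp add: Adm_def)
qed

end

theorem mainTheorem14:
  fixes R RM P :: "(int ^ 'n) set" and cr :: "int ^ 'n \<Rightarrow> int ^ 'n"
    and lam :: "int ^ 'n" and u :: "real ^ 'n \<Rightarrow> real ^ 'n"
  assumes "reduced_root_datum R cr"
    and "pos_system R P"
    and "levi_roots R RM"
    and "u \<in> WM_set R RM P cr"
  shows "(\<lambda>x. emult (0, inv u) (emult x (0, u))) ` Adm RM (P \<inter> RM) cr lam
           \<subseteq> Adm R P cr lam"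
proof -
  interpret positive_root_datum R cr P
    using assms(1,2) by unfold_locales
  have conj: "(\<lambda>x. emult (0, inv u) (emult x (0, u))) = weyl_conj u"
    by (simp add: fun_eq_iff weyl_conj_def)
  show ?thesis unfolding conj by (rule Adm_weyl_conj[OF assms(3,4)])
qed

end
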